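(* Consider the one-dimensional Approximate Hierarchical Heavy Hitters problem over a rooted tree $T$ all of whose leaves have depth $h$, so the lattice has $H=h+1$ nodes (depths $0,\dots,h$). Let $\phi\in(0,1]$ and let $\epsilon>0$ be such that $1/\epsilon$ is a positive integer. Run the one-dimensional algorithm described in the context (one Space Saving instance with $1/\epsilon$ counters per depth, followed by the one-dimensional output procedure with threshold $\phi$). Then the algorithm stores $H\cdot(1/\epsilon)$ counters, i.e. uses $O(H/\epsilon)$ space, and its output set $P$ together with the reported values $f_{\min}(p),f_{\max}(p)$ for $p\in P$ satisfies the Accuracy and Coverage requirements: (Accuracy) for all $p\in P$, $f_{\min}(p)\le f(p)\le f_{\max}(p)$ and $f_{\max}(p)-f_{\min}(p)\le\epsilon N$; (Coverage) for every prefix $p\notin P$, $F_p<\phi N$, where $F_p$ is the conditioned count of $p$ with respect to $P$.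
   Context: Hierarchy: a rooted tree $T$ in which every leaf has depth $h$; nodes are prefixes, leaves are fully specified elements. For prefixes $e,p$, $e\preceq p$ means $p$ is an ancestor of $e$ or equal to $e$; $e\prec p$ means $e\preceq p$, $e\ne p$. The lattice node (label) of a prefix is its depth. Each non-root prefix $p$ has a parent $\mathrm{par}(p)$. Stream: a sequence of updates $(e,c)$ with $e$ fully specified and $c$ a positive integer. $f(e)$ is the sum of the $c$'s of updates with element $e$; $N=\sum_e f(e)$. The unconditioned count of a prefix $p$ is $f(p)=\sum_{e \text{ fully specified},\,e\preceq p} f(e)$. For a set $P$ of prefixes and a prefix $p$, with $P_p=\{q\in P:q\prec p\}$, the conditioned count is $F_p=\sum f(e)$ over fully specified $e$ with $e\preceq p$ and $e\not\preceq q$ for all $q\in P_p$. Space Saving with $m$ counters: maintains a set $T'$ of at most $m$ items, each with a counter $c(i)$ and an error value $\mathrm{err}(i)$. On input $(i,c)$: if $i\in T'$, set $c(i)\mathrel{+}=c$; else if $|T'|<m$, add $i$ with $c(i)=c$, $\mathrm{err}(i)=0$; else remove an item $j$ with the smallest counter and add $i$ with $c(i)=c(j)+c$, $\mathrm{err}(i)=c(j)$. Estimates for item $i$: if $i\in T'$, $f_{\max}(i)=c(i)$ and $f_{\min}(i)=c(i)-\mathrm{err}(i)$; otherwise $f_{\min}(i)=0$ and $f_{\max}(i)$ equals the smallest counter if $|T'|=m$, and $0$ otherwise. Algorithm: keep one Space Saving instance with $1/\epsilon$ counters for each depth $0,\dots,h$. On update $(e,c)$, for every prefix $p$ with $e\preceq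 p$, feed $(p,c)$ to the instance for the depth of $p$. For a prefix $p$, $f_{\min}(p),f_{\max}(p)$ denote the estimates of the instance for $p$'s depth. Output procedure with threshold $\phi$: set $s_e=0$ for all prefixes; process all prefixes in postorder (each prefix after all its descendants); for prefix $e$: if $f_{\max}(e)-s_e\ge\phi N$, output $e$ (put it in $P$) together with $f_{\min}(e),f_{\max}(e)$, and (if $e$ is not the root) add $f_{\min}(e)$ to $s_{\mathrm{par}(e)}$; otherwise (if $e$ is not the root) add $s_e$ to $s_{\mathrm{par}(e)}$. *)

theory Defs
  imports Complex_Main "HOL-Library.Sublist"
begin

text \<open>A prefix (tree node) is represented by the path from the root, i.e. a list of
child labels; the root is the empty list, the parent of a non-root node p is butlast p,
the depth of p is length p.  For prefixes e, p: e \<preceq> p (p is an ancestor of e or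
equal to e) is  prefix p e ; e \<prec> p is  strict_prefix p e.\<close>

definition hierarchy :: "'a list set \<Rightarrow> nat \<Rightarrow> bool" where
  "hierarchy T h \<longleftrightarrow> finite T \<and> [] \<in> T
     \<and> (\<forall>p\<in>T. \<forall>q. prefix q p \<longrightarrow> q \<in> T)
     \<and> (\<forall>p\<in>T. (\<not> (\<exists>q\<in>T. strict_prefix p q)) \<longrightarrow> length p = h)"

definition fully_specified :: "'a list set \<Rightarrow> 'a list \<Rightarrow> bool" where
  "fully_specified T e \<longleftrightarrow> e \<in> T \<and> \<not> (\<exists>q\<in>T. strict_prefix e q)"

type_synonym 'a stream = "('a list \<times> nat) list"

definition valid_stream :: "'a list set \<Rightarrow> 'a stream \<Rightarrow> bool" where
  "valid_stream T xs \<longleftrightarrow> (\<forall>(e,c)\<in>set xs. fully_specified T e \<and> c > 0)"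

definition total :: "'a stream \<Rightarrow> nat" where
  "total xs = sum_list (map snd xs)"

definition ucount :: "'a stream \<Rightarrow> 'a list \<Rightarrow> nat" where
  "ucount xs p = sum_list (map snd (filter (\<lambda>(e,c). prefix p e) xs))"

definition ccount :: "'a stream \<Rightarrow> 'a list set \<Rightarrow> 'a list \<Rightarrow> nat" where
  "ccount xs P p = sum_list (map snd (filter (\<lambda>(e,c). prefix p e \<and>
      \<not> (\<exists>q\<in>P. strict_prefix p q \<and> prefix q e)) xs))"

text \<open>State: partial map from monitored items to (counter, error).\<close>
type_synonym 'b ss_state = "'b \<Rightarrow> (nat \<times> nat) option"

inductive ss_step :: "nat \<Rightarrow> 'b ss_state \<Rightarrow> 'b \<times> nat \<Rightarrow> 'b ss_state \<Rightarrow> bool" for m where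
  present: "S i = Some (x, er) \<Longrightarrow> ss_step m S (i, c) (S(i \<mapsto> (x + c, er)))"
| add: "S i = None \<Longrightarrow> card (dom S) < m \<Longrightarrow> ss_step m S (i, c) (S(i \<mapsto> (c, 0)))"
| replace: "S i = None \<Longrightarrow> \<not> card (dom S) < m \<Longrightarrow> S j = Some (cj, ej) \<Longrightarrow>
     (\<forall>k x y. S k = Some (x, y) \<longrightarrow> cj \<le> x) \<Longrightarrow>
     ss_step m S (i, c) ((S(j := None))(i \<mapsto> (cj + c, cj)))"

inductive ss_run :: "nat \<Rightarrow> 'b ss_state \<Rightarrow> ('b \<times> nat) list \<Rightarrow> 'b ss_state \<Rightarrow> bool" for m where
  Nil: "ss_run m S [] S"
| Cons: "ss_step m S x S1 \<Longrightarrow> ss_run m S1 xs S2 \<Longrightarrow> ss_run m S (x # xs) S2"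

definition ss_fmin :: "'b ss_state \<Rightarrow> 'b \<Rightarrow> nat" where
  "ss_fmin S i = (case S i of Some (c, er) \<Rightarrow> c - er | None \<Rightarrow> 0)"

definition ss_fmax :: "nat \<Rightarrow> 'b ss_state \<Rightarrow> 'b \<Rightarrow> nat" where
  "ss_fmax m S i = (case S i of Some (c, er) \<Rightarrow> c
     | None \<Rightarrow> (if card (dom S) = m then Min {c. \<exists>k er. S k = Some (c, er)} else 0))"

definition depth_input :: "nat \<Rightarrow> 'a stream \<Rightarrow> ('a list \<times> nat) list" where
  "depth_input d xs = map (\<lambda>(e, c). (take d e, c)) xs"

definition postorder :: "'a list set \<Rightarrow> 'a list list \<Rightarrow> bool" where
  "postorder T L \<longleftrightarrow> distinct L \<and> set L = T \<and>
     (\<forall>i<length L. \<forall>j<length L. strict_prefix (L ! j) (L ! i) \<longrightarrow> i < j)"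

definition out_step :: "nat \<Rightarrow> (nat \<Rightarrow> 'a list ss_state) \<Rightarrow> real \<Rightarrow> 'a list
     \<Rightarrow> ('a list \<Rightarrow> nat) \<times> 'a list set \<Rightarrow> ('a list \<Rightarrow> nat) \<times> 'a list set" where
  "out_step m S thr e sP =
     (let s = fst sP; P = snd sP;
          fmn = ss_fmin (S (length e)) e; fmx = ss_fmax m (S (length e)) e in
      if real fmx - real (s e) \<ge> thr
      then ((if e \<noteq> [] then s(butlast e := s (butlast e) + fmn) else s), insert e P)
      else ((if e \<noteq> [] then s(butlast e := s (butlast e) + s e) else s), P))"

definition output_set :: "nat \<Rightarrow> (nat \<Rightarrow> 'a list ss_state) \<Rightarrow> real \<Rightarrow> 'a list list \<Rightarrow> 'a list set" where
  "output_set m S thr L = snd (fold (out_step m S thr) L (\<lambda>_. 0, {}))"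

end

theory Submission
  imports Defs
begin

(* Space Saving with m counters maintains an invariant: the counters sum to the stream weight N,
   a monitored item with counter c and error er has f <= c <= f + er and m * er <= N (er was the
   smallest of m counters summing to at most N), and an unmonitored item's frequency is at most
   every counter.  Hence f_min <= f <= f_max and f_max - f_min <= N / m at every depth.

   In the output procedure, s(e) never exceeds the weight of the updates lying below an output
   that descends from an already processed child of e: a child c in P contributes
   f_min(c) <= f(c), any other child contributes s(c), and children have disjoint subtrees.
   So when p is processed and not output, F_p = f(p) - (weight below outputs strictly under p)
   <= f_max(p) - s(p) < phi N; as P only grows afterwards, F_p only decreases.  Coverage thus
   needs no more of the postorder than that it enumerates every prefix exactly once. *)

section \<open>Space Saving\<close>

definition freq :: "('b \<times> nat) list \<Rightarrow> 'b \<Rightarrow> nat" where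
  "freq ys i = sum_list (map snd (filter (\<lambda>(j, c). j = i) ys))"

definition weight :: "('b \<times> nat) list \<Rightarrow> nat" where
  "weight ys = sum_list (map snd ys)"

lemma freq_Nil [simp]: "freq [] i = 0"
  by (simp add: freq_def)

lemma freq_snoc [simp]: "freq (ys @ [(j, c)]) i = freq ys i + (if i = j then c else 0)"
  by (simp add: freq_def)

lemma weight_Nil [simp]: "weight [] = 0"
  by (simp add: weight_def)

lemma weight_snoc [simp]: "weight (ys @ [(j, c)]) = weight ys + c"
  by (simp add: weight_def)

lemma weight_filter_mono:
  "(\<And>x. x \<in> set ys \<Longrightarrow> Q x \<Longrightarrow> R x) \<Longrightarrow> weight (filter Q ys) \<le> weight (filter R ys)"
  by (induction ys) (auto simp: weight_def)

lemma weight_filter_disj: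
  "(\<And>x. x \<in> set ys \<Longrightarrow> Q x \<Longrightarrow> R x \<Longrightarrow> False) \<Longrightarrow>
   weight (filter (\<lambda>x. Q x \<or> R x) ys) = weight (filter Q ys) + weight (filter R ys)"
  by (induction ys) (auto simp: weight_def)

definition counter :: "'b ss_state \<Rightarrow> 'b \<Rightarrow> nat" where
  "counter S k = (case S k of Some (c, _) \<Rightarrow> c | None \<Rightarrow> 0)"

lemma sum_counter_superset:
  assumes "finite A" "dom S \<subseteq> A"
  shows "sum (counter S) (dom S) = sum (counter S) A"
proof (rule sum.mono_neutral_left)
  show "\<forall>k\<in>A - dom S. counter S k = 0"
    by (auto simp: counter_def split: option.splits)
qed (fact assms)+

lemma sum_counter_upd:
  assumes fin: "finite (dom S)"
  shows "sum (counter (S(i := v))) (dom (S(i := v))) + counter S i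
       = sum (counter S) (dom S) + counter (S(i := v)) i"
proof -
  let ?A = "insert i (dom S)"
  have split: "sum (counter S') (dom S') = counter S' i + sum (counter S') (dom S - {i})"
    if "dom S' \<subseteq> ?A" for S'
  proof -
    have "sum (counter S') (dom S') = sum (counter S') ?A"
      using fin that by (intro sum_counter_superset) auto
    also have "\<dots> = counter S' i + sum (counter S') (dom S - {i})"
      using fin by (simp add: sum.insert_remove)
    finally show ?thesis .
  qed
  have "sum (counter (S(i := v))) (dom S - {i}) = sum (counter S) (dom S - {i})"
    by (intro sum.cong) (auto simp: counter_def)
  moreover have "dom (S(i := v)) \<subseteq> ?A" by auto
  ultimately show ?thesis using split [of "S(i := v)"] split [OF subset_insertI] by linarith
qed

lemma sum_counter_replace:
  assumes fin: "finite (dom S)" and i: "S i = None" and j: "S j = Some (cj, ej)"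
  shows "sum (counter ((S(j := None))(i \<mapsto> (x, y)))) (dom ((S(j := None))(i \<mapsto> (x, y)))) + cj
       = sum (counter S) (dom S) + x"
proof -
  let ?S1 = "S(j := None)"
  have "sum (counter ?S1) (dom ?S1) + cj = sum (counter S) (dom S)"
    using sum_counter_upd [OF fin, of j None] j by (simp add: counter_def)
  moreover have "sum (counter (?S1(i \<mapsto> (x, y)))) (dom (?S1(i \<mapsto> (x, y)))) + counter ?S1 i
      = sum (counter ?S1) (dom ?S1) + counter (?S1(i \<mapsto> (x, y))) i"
    using fin by (intro sum_counter_upd) simp
  moreover have "counter ?S1 i = 0" "counter (?S1(i \<mapsto> (x, y))) i = x"
    using i by (simp_all add: counter_def)
  ultimately show ?thesis by simp
qed

lemma card_dom_replace:
  assumes "finite (dom S)" and "S i = None" and "S j = Some v"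
  shows "card (dom ((S(j := None))(i \<mapsto> w))) = card (dom S)"
proof -
  have "i \<noteq> j" "j \<in> dom S" using assms by auto
  then have "dom ((S(j := None))(i \<mapsto> w)) = insert i (dom S - {j})" by auto
  moreover have "card (dom S) > 0" using \<open>j \<in> dom S\<close> assms(1) by (auto simp: card_gt_0_iff)
  ultimately show ?thesis using assms by (simp add: card_insert_if domIff)
qed

definition ss_invariant :: "nat \<Rightarrow> 'b ss_state \<Rightarrow> ('b \<times> nat) list \<Rightarrow> bool" where
  "ss_invariant m S ys \<longleftrightarrow>
     finite (dom S) \<and> card (dom S) \<le> m \<and> sum (counter S) (dom S) = weight ys
     \<and> (\<forall>i c er. S i = Some (c, er) \<longrightarrow>
          er \<le> c \<and> freq ys i \<le> c \<and> c \<le> freq ys i + er \<and> m * er \<le> weight ys)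
     \<and> (\<forall>i. S i = None \<longrightarrow>
          (\<forall>k\<in>dom S. freq ys i \<le> counter S k) \<and> (card (dom S) < m \<longrightarrow> freq ys i = 0))"

lemma ss_invariantI:
  assumes "finite (dom S)" "card (dom S) \<le> m" "sum (counter S) (dom S) = weight ys"
    and "\<And>i c er. S i = Some (c, er) \<Longrightarrow>
           er \<le> c \<and> freq ys i \<le> c \<and> c \<le> freq ys i + er \<and> m * er \<le> weight ys"
    and "\<And>i k. S i = None \<Longrightarrow> k \<in> dom S \<Longrightarrow> freq ys i \<le> counter S k"
    and "\<And>i. S i = None \<Longrightarrow> card (dom S) < m \<Longrightarrow> freq ys i = 0"
  shows "ss_invariant m S ys"
  using assms by (simp add: ss_invariant_def)

lemma ss_invariant_empty: "ss_invariant m Map.empty []"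
  by (simp add: ss_invariant_def)

lemma ss_invariant_monitored:
  "ss_invariant m S ys \<Longrightarrow> S i = Some (c, er) \<Longrightarrow>
   er \<le> c \<and> freq ys i \<le> c \<and> c \<le> freq ys i + er \<and> m * er \<le> weight ys"
  by (simp add: ss_invariant_def)

lemma ss_invariant_unmonitored:
  "ss_invariant m S ys \<Longrightarrow> S i = None \<Longrightarrow>
   (\<forall>k\<in>dom S. freq ys i \<le> counter S k) \<and> (card (dom S) < m \<longrightarrow> freq ys i = 0)"
  by (simp add: ss_invariant_def)

lemma ss_invariant_present:
  assumes inv: "ss_invariant m S ys" and i: "S i = Some (x, er)"
  shows "ss_invariant m (S(i \<mapsto> (x + c, er))) (ys @ [(i, c)])"
proof (rule ss_invariantI)
  let ?S' = "S(i \<mapsto> (x + c, er))" and ?ys' = "ys @ [(i, c)]"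
  have fin: "finite (dom S)" and dom': "dom ?S' = dom S" using inv i by (auto simp: ss_invariant_def)
  then show "finite (dom ?S')" "card (dom ?S') \<le> m" using inv by (auto simp: ss_invariant_def)
  from sum_counter_upd [OF fin, of i "Some (x + c, er)"] i inv
  show "sum (counter ?S') (dom ?S') = weight ?ys'"
    by (simp add: ss_invariant_def counter_def dom')
  show "er' \<le> c' \<and> freq ?ys' k \<le> c' \<and> c' \<le> freq ?ys' k + er' \<and> m * er' \<le> weight ?ys'"
    if k: "?S' k = Some (c', er')" for k c' er'
  proof (cases "k = i")
    case True
    with k ss_invariant_monitored [OF inv i] show ?thesis by auto
  next
    case False
    with k ss_invariant_monitored [OF inv, of k c' er'] show ?thesis by auto
  qed
  have unmon: "k \<noteq> i \<and> (\<forall>k'\<in>dom S. freq ys k \<le> counter S k')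
      \<and> (card (dom S) < m \<longrightarrow> freq ys k = 0)" if "?S' k = None" for k
    using that ss_invariant_unmonitored [OF inv, of k] by (auto split: if_splits)
  show "card (dom ?S') < m \<Longrightarrow> freq ?ys' k = 0" if "?S' k = None" for k
    using unmon [OF that] unfolding dom' by simp
  show "freq ?ys' k \<le> counter ?S' k'" if "?S' k = None" "k' \<in> dom ?S'" for k k'
  proof -
    have "freq ?ys' k \<le> counter S k'" using unmon [OF that(1)] that(2) unfolding dom' by simp
    also have "\<dots> \<le> counter ?S' k'" using i by (simp add: counter_def)
    finally show ?thesis .
  qed
qed

lemma ss_invariant_add:
  assumes inv: "ss_invariant m S ys" and i: "S i = None" and not_full: "card (dom S) < m"
  shows "ss_invariant m (S(i \<mapsto> (c, 0))) (ys @ [(i, c)])"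
proof (rule ss_invariantI)
  let ?S' = "S(i \<mapsto> (c, 0))" and ?ys' = "ys @ [(i, c)]"
  have fin: "finite (dom S)" using inv by (simp add: ss_invariant_def)
  have fresh: "freq ys i = 0" using ss_invariant_unmonitored [OF inv i] not_full by simp
  show "finite (dom ?S')" "card (dom ?S') \<le> m" using fin not_full i by (auto simp: card_insert_if)
  from sum_counter_upd [OF fin, of i "Some (c, 0)"] i inv
  show "sum (counter ?S') (dom ?S') = weight ?ys'"
    by (simp add: ss_invariant_def counter_def)
  show "er' \<le> c' \<and> freq ?ys' k \<le> c' \<and> c' \<le> freq ?ys' k + er' \<and> m * er' \<le> weight ?ys'"
    if k: "?S' k = Some (c', er')" for k c' er'
  proof (cases "k = i")
    case True
    with k fresh show ?thesis by auto
  next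
    case False
    with k ss_invariant_monitored [OF inv, of k c' er'] show ?thesis by auto
  qed
  have "freq ?ys' k = 0" if "?S' k = None" for k
    using that ss_invariant_unmonitored [OF inv, of k] not_full by (auto split: if_splits)
  then show "\<And>k k'. ?S' k = None \<Longrightarrow> freq ?ys' k \<le> counter ?S' k'"
    and "\<And>k. ?S' k = None \<Longrightarrow> freq ?ys' k = 0"
    by simp_all
qed

lemma ss_full_counter_bound:
  assumes "ss_invariant m S ys" and "card (dom S) = m" and "\<And>k. k \<in> dom S \<Longrightarrow> b \<le> counter S k"
  shows "m * b \<le> weight ys"
  using sum_bounded_below [of "dom S" b "counter S"] assms by (simp add: ss_invariant_def)

lemma ss_invariant_replace:
  assumes inv: "ss_invariant m S ys" and i: "S i = None" and full: "\<not> card (dom S) < m"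
    and j: "S j = Some (cj, ej)" and min: "\<forall>k x y. S k = Some (x, y) \<longrightarrow> cj \<le> x"
  shows "ss_invariant m ((S(j := None))(i \<mapsto> (cj + c, cj))) (ys @ [(i, c)])"
proof (rule ss_invariantI)
  let ?S' = "(S(j := None))(i \<mapsto> (cj + c, cj))" and ?ys' = "ys @ [(i, c)]"
  have fin: "finite (dom S)" and "card (dom S) \<le> m" and sum: "sum (counter S) (dom S) = weight ys"
    using inv by (simp_all add: ss_invariant_def)
  with full have card: "card (dom S) = m" by simp
  have card': "card (dom ?S') = m" using card_dom_replace [OF fin i j] card by simp
  then show "finite (dom ?S')" "card (dom ?S') \<le> m"
    using fin by simp_all
  show "sum (counter ?S') (dom ?S') = weight ?ys'"
    using sum_counter_replace [OF fin i j, of "cj + c" cj] sum by simp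
  have "j \<in> dom S" and cnt_j: "counter S j = cj" using j by (auto simp: counter_def)
  have min': "cj \<le> counter S k" if "k \<in> dom S" for k
    using that min by (force simp: counter_def)
  have below_min: "freq ys k \<le> cj" if "S k = None \<or> k = j" for k
    using that ss_invariant_unmonitored [OF inv, of k] ss_invariant_monitored [OF inv j]
      \<open>j \<in> dom S\<close> cnt_j by auto
  show "er' \<le> c' \<and> freq ?ys' k \<le> c' \<and> c' \<le> freq ?ys' k + er' \<and> m * er' \<le> weight ?ys'"
    if k: "?S' k = Some (c', er')" for k c' er'
  proof (cases "k = i")
    case True
    have "m * cj \<le> weight ys" using ss_full_counter_bound [OF inv card min'] .
    with True k below_min [of i] i show ?thesis by auto
  next
    case False
    with k ss_invariant_monitored [OF inv, of k c' er'] show ?thesis by (auto split: if_splits)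
  qed
  show "freq ?ys' k \<le> counter ?S' k'" if "?S' k = None" "k' \<in> dom ?S'" for k k'
  proof -
    from that(1) have "k \<noteq> i" "S k = None \<or> k = j" by (auto split: if_splits)
    then have "freq ?ys' k \<le> cj" using below_min by simp
    also have "cj \<le> counter ?S' k'"
      using that(2) min' by (auto simp: counter_def split: if_splits)
    finally show ?thesis .
  qed
  show "card (dom ?S') < m \<Longrightarrow> freq ?ys' k = 0" for k
    using card' by simp
qed

lemma ss_invariant_step:
  assumes "ss_step m S (i, c) S'" and "ss_invariant m S ys"
  shows "ss_invariant m S' (ys @ [(i, c)])"
  using assms(1)
  by cases (use assms(2) ss_invariant_present ss_invariant_add ss_invariant_replace in auto)

lemma ss_run_invariant:
  "ss_run m S zs S' \<Longrightarrow> ss_invariant m S ys \<Longrightarrow> ss_invariant m S' (ys @ zs)"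
proof (induction arbitrary: ys rule: ss_run.induct)
  case (Cons S x S1 xs S2)
  obtain i c where "x = (i, c)" by fastforce
  with Cons show ?case using ss_invariant_step by fastforce
qed simp

lemma ss_counter_values: "{c. \<exists>k er. S k = Some (c, er)} = counter S ` dom S"
  by (force simp: counter_def)

lemma ss_estimates:
  assumes inv: "ss_invariant m S ys" and "m > 0"
  shows "ss_fmin S i \<le> freq ys i \<and> freq ys i \<le> ss_fmax m S i
    \<and> m * (ss_fmax m S i - ss_fmin S i) \<le> weight ys"
proof (cases "S i")
  case (Some v)
  with ss_invariant_monitored [OF inv, of i "fst v" "snd v"] show ?thesis
    by (auto simp: ss_fmin_def ss_fmax_def split: prod.split)
next
  case None
  note unmon = ss_invariant_unmonitored [OF inv None]
  have fin: "finite (dom S)" and sum: "sum (counter S) (dom S) = weight ys" and "card (dom S) \<le> m"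
    using inv by (simp_all add: ss_invariant_def)
  show ?thesis
  proof (cases "card (dom S) = m")
    case True
    let ?min = "Min (counter S ` dom S)"
    from True \<open>m > 0\<close> have "dom S \<noteq> {}" by auto
    then have "freq ys i \<le> ?min" using fin unmon by simp
    moreover have "m * ?min \<le> weight ys"
      using ss_full_counter_bound [OF inv True, of ?min] fin by simp
    ultimately show ?thesis using None True by (simp add: ss_fmin_def ss_fmax_def ss_counter_values)
  next
    case False
    with unmon \<open>card (dom S) \<le> m\<close> None show ?thesis by (simp add: ss_fmin_def ss_fmax_def)
  qed
qed

section \<open>Prefix counts at each depth\<close>

lemma hierarchy_length_le:
  assumes hier: "hierarchy T h" and p: "p \<in> T"
  shows "length p \<le> h"
proof -
  let ?A = "{q \<in> T. prefix p q}"
  have fin: "finite (length ` ?A)" using hier by (simp add: hierarchy_def)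
  have "p \<in> ?A" using p by simp
  then have "Max (length ` ?A) \<in> length ` ?A" using fin by (intro Max_in) auto
  then obtain q where q: "q \<in> T" "prefix p q" and q_max: "length q = Max (length ` ?A)" by auto
  have longest: "length r \<le> length q" if "r \<in> ?A" for r
    unfolding q_max using fin that by (intro Max_ge) auto
  have "\<not> (\<exists>r\<in>T. strict_prefix q r)"
  proof
    assume "\<exists>r\<in>T. strict_prefix q r"
    then obtain r where "r \<in> T" "strict_prefix q r" by blast
    with q have "r \<in> ?A" by (auto dest: prefix_order.le_less_trans)
    moreover have "length q < length r" using \<open>strict_prefix q r\<close> by (rule prefix_length_less)
    ultimately show False using longest by fastforce
  qed
  with hier q(1) have "length q = h" unfolding hierarchy_def by blast
  with q(2) show ?thesis using prefix_length_le by blast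
qed

lemma hierarchy_leaf_length:
  "hierarchy T h \<Longrightarrow> fully_specified T e \<Longrightarrow> length e = h"
  by (simp add: hierarchy_def fully_specified_def)

lemma freq_depth_input:
  assumes "\<forall>(e, c)\<in>set xs. length p \<le> length e"
  shows "freq (depth_input (length p) xs) p = ucount xs p"
  using assms
proof (induction xs)
  case (Cons x xs)
  obtain e c where x: "x = (e, c)" by fastforce
  with Cons.prems have "take (length p) e = p \<longleftrightarrow> prefix p e"
    by (auto simp: prefix_def) (metis append_take_drop_id)
  with Cons x show ?case by (simp add: freq_def depth_input_def ucount_def)
qed (simp add: freq_def depth_input_def ucount_def)

lemma weight_depth_input: "weight (depth_input d xs) = total xs"
  by (induction xs) (auto simp: weight_def depth_input_def total_def)

section \<open>The output procedure\<close>

definition covered_count :: "'a stream \<Rightarrow> 'a list set \<Rightarrow> 'a list \<Rightarrow> nat" where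
  "covered_count xs P p =
     weight (filter (\<lambda>(e, c). prefix p e \<and> (\<exists>q\<in>P. strict_prefix p q \<and> prefix q e)) xs)"

lemma ccount_plus_covered_count: "ccount xs P p + covered_count xs P p = ucount xs p"
  by (induction xs) (auto simp: ccount_def covered_count_def ucount_def weight_def)

lemma ccount_antimono: "P \<subseteq> P' \<Longrightarrow> ccount xs P' p \<le> ccount xs P p"
  unfolding ccount_def weight_def [symmetric] by (rule weight_filter_mono) auto

definition output_weight :: "'a stream \<Rightarrow> 'a list set \<Rightarrow> 'a list set \<Rightarrow> nat" where
  "output_weight xs P C = weight (filter (\<lambda>(e, _). \<exists>k\<in>C. \<exists>q\<in>P. prefix k q \<and> prefix q e) xs)"

lemma output_weight_mono:
  assumes "P \<subseteq> P'" and "\<And>k. k \<in> C \<Longrightarrow> \<exists>k'\<in>C'. prefix k' k"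
  shows "output_weight xs P C \<le> output_weight xs P' C'"
  unfolding output_weight_def
proof (rule weight_filter_mono)
  fix x :: "'a list \<times> nat"
  assume "(\<lambda>(e, _). \<exists>k\<in>C. \<exists>q\<in>P. prefix k q \<and> prefix q e) x"
  then obtain e n k q where x: "x = (e, n)" "k \<in> C" "q \<in> P" "prefix k q" "prefix q e" by auto
  moreover obtain k' where "k' \<in> C'" "prefix k' k" using assms(2) \<open>k \<in> C\<close> by blast
  ultimately show "(\<lambda>(e, _). \<exists>k\<in>C'. \<exists>q\<in>P'. prefix k q \<and> prefix q e) x"
    using assms(1) by (blast intro: prefix_order.trans)
qed

lemma output_weight_Un:
  assumes "C \<inter> D = {}" and "\<And>k. k \<in> C \<union> D \<Longrightarrow> length k = n"
  shows "output_weight xs P (C \<union> D) = output_weight xs P C + output_weight xs P D"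
proof -
  let ?below = "\<lambda>C (e :: 'a list, _ :: nat). \<exists>k\<in>C. \<exists>q\<in>P. prefix k q \<and> prefix q e"
  have "output_weight xs P (C \<union> D) = weight (filter (\<lambda>x. ?below C x \<or> ?below D x) xs)"
    unfolding output_weight_def bex_Un by (simp add: case_prod_unfold)
  also have "\<dots> = output_weight xs P C + output_weight xs P D"
    unfolding output_weight_def
  proof (rule weight_filter_disj)
    fix x assume "?below C x" "?below D x"
    then obtain e n k k' q q' where "x = (e, n)" "k \<in> C" "k' \<in> D"
      "prefix k q" "prefix q e" "prefix k' q'" "prefix q' e" by auto
    then have "prefix k e" "prefix k' e" by (auto intro: prefix_order.trans)
    with \<open>k \<in> C\<close> \<open>k' \<in> D\<close> assms(2) have "k = k'"
      by (metis Un_iff prefix_length_prefix prefix_order.antisym order_refl)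
    with \<open>k \<in> C\<close> \<open>k' \<in> D\<close> assms(1) show False by blast
  qed
  finally show ?thesis .
qed

lemma ucount_le_output_weight: "p \<in> P \<Longrightarrow> ucount xs p \<le> output_weight xs P {p}"
  unfolding ucount_def output_weight_def weight_def [symmetric] by (rule weight_filter_mono) auto

definition children :: "'a list list \<Rightarrow> 'a list \<Rightarrow> 'a list set" where
  "children M e = {c \<in> set M. c \<noteq> [] \<and> butlast c = e}"

lemma children_snoc:
  "children (M @ [c]) e = (if c \<noteq> [] \<and> butlast c = e then insert c (children M e) else children M e)"
  by (auto simp: children_def)

lemma length_children: "k \<in> children M e \<Longrightarrow> length k = Suc (length e)"
  by (auto simp: children_def)

lemma strict_prefix_children: "k \<in> children M e \<Longrightarrow> strict_prefix e k"
  unfolding children_def by (metis (mono_tags) append_butlast_last_id mem_Collect_eq strict_prefixI')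

lemma output_weight_children_le_covered_count:
  "output_weight xs P (children M e) \<le> covered_count xs P e"
  unfolding output_weight_def covered_count_def
proof (rule weight_filter_mono)
  fix x :: "'a list \<times> nat"
  assume "(\<lambda>(l, _). \<exists>k\<in>children M e. \<exists>q\<in>P. prefix k q \<and> prefix q l) x"
  then obtain l n k q where x: "x = (l, n)" "k \<in> children M e" "q \<in> P" "prefix k q" "prefix q l"
    by auto
  then have "strict_prefix e q"
    using strict_prefix_children by (blast intro: prefix_order.less_le_trans)
  with x show "(\<lambda>(l, c). prefix e l \<and> (\<exists>q\<in>P. strict_prefix e q \<and> prefix q l)) x"
    by (auto intro: prefix_order.trans dest: prefix_order.less_imp_le)
qed

lemma output_weight_children_le: "output_weight xs P (children M e) \<le> output_weight xs P {e}"
  by (rule output_weight_mono) (auto dest: strict_prefix_children prefix_order.less_imp_le)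

lemma output_weight_children_snoc:
  assumes "c \<notin> set M" "c \<noteq> []"
  shows "output_weight xs P (children (M @ [c]) (butlast c))
       = output_weight xs P (children M (butlast c)) + output_weight xs P {c}"
proof -
  have "children M (butlast c) \<inter> {c} = {}" using assms(1) by (simp add: children_def)
  moreover have "length k = length c" if "k \<in> children M (butlast c) \<union> {c}" for k
  proof (cases "k = c")
    case False
    with that have "length k = Suc (length (butlast c))" using length_children by blast
    with assms(2) show ?thesis by simp
  qed simp
  ultimately have "output_weight xs P (children M (butlast c) \<union> {c})
       = output_weight xs P (children M (butlast c)) + output_weight xs P {c}"
    by (rule output_weight_Un)
  with assms(2) show ?thesis by (simp add: children_snoc)
qed

lemma parent_sum_update:
  assumes s: "\<And>e. s e \<le> output_weight xs P (children M e)"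
    and c: "c \<notin> set M" and x: "x \<le> output_weight xs P {c}"
  shows "(if c \<noteq> [] then s(butlast c := s (butlast c) + x) else s) e
       \<le> output_weight xs P (children (M @ [c]) e)"
proof (cases "c \<noteq> [] \<and> e = butlast c")
  case True
  with s [of e] x output_weight_children_snoc [OF c, of xs P] show ?thesis by simp
next
  case False
  have "output_weight xs P (children M e) \<le> output_weight xs P (children (M @ [c]) e)"
    by (rule output_weight_mono) (auto simp: children_snoc)
  with s [of e] False show ?thesis by auto
qed

fun output_invariant :: "'a stream \<Rightarrow> real \<Rightarrow> 'a list list
    \<Rightarrow> ('a list \<Rightarrow> nat) \<times> 'a list set \<Rightarrow> bool" where
  "output_invariant xs thr M (s, P) \<longleftrightarrow> P \<subseteq> set M
     \<and> (\<forall>e. s e \<le> output_weight xs P (children M e))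
     \<and> (\<forall>p\<in>set M. p \<notin> P \<longrightarrow> real (ccount xs P p) < thr)"

lemma output_invariant_step:
  assumes inv: "output_invariant xs thr M (s, P)" and c: "c \<notin> set M"
    and lower: "ss_fmin (S (length c)) c \<le> ucount xs c"
    and upper: "ucount xs c \<le> ss_fmax m (S (length c)) c"
  shows "output_invariant xs thr (M @ [c]) (out_step m S thr c (s, P))"
proof -
  let ?fmin = "ss_fmin (S (length c)) c" and ?fmax = "ss_fmax m (S (length c)) c"
  from inv have sub: "P \<subseteq> set M" and s: "\<And>e. s e \<le> output_weight xs P (children M e)"
    and cov: "\<And>p. p \<in> set M \<Longrightarrow> p \<notin> P \<Longrightarrow> real (ccount xs P p) < thr"
    by auto
  show ?thesis
  proof (cases "thr \<le> real ?fmax - real (s c)")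
    case True
    let ?P = "insert c P"
    have "s e \<le> output_weight xs ?P (children M e)" for e
      using s [of e] output_weight_mono [of P ?P "children M e" "children M e" xs] by fastforce
    moreover have "?fmin \<le> output_weight xs ?P {c}"
      using lower ucount_le_output_weight [of c ?P xs] by simp
    moreover have "real (ccount xs ?P p) < thr" if "p \<in> set M" "p \<notin> ?P" for p
      using that cov [of p] ccount_antimono [of P ?P xs p] by force
    ultimately show ?thesis
      using True sub parent_sum_update [OF _ c, of s xs ?P ?fmin]
      by (auto simp: out_step_def Let_def)
  next
    case False
    have "s c \<le> output_weight xs P {c}"
      using s [of c] output_weight_children_le [of xs P M c] by simp
    moreover have "real (ccount xs P c) < thr"
    proof -
      have "ccount xs P c + s c \<le> ucount xs c"
        using ccount_plus_covered_count [of xs P c] s [of c]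
          output_weight_children_le_covered_count [of xs P M c] by linarith
      with upper False show ?thesis by linarith
    qed
    ultimately show ?thesis
      using False sub cov parent_sum_update [OF s c, of "s c"]
      by (auto simp: out_step_def Let_def)
  qed
qed

lemma output_invariant_fold:
  assumes "output_invariant xs thr M sP" and "distinct (M @ N)"
    and "\<forall>c\<in>set N. ss_fmin (S (length c)) c \<le> ucount xs c \<and> ucount xs c \<le> ss_fmax m (S (length c)) c"
  shows "output_invariant xs thr (M @ N) (fold (out_step m S thr) N sP)"
  using assms
proof (induction N arbitrary: M sP)
  case (Cons c N)
  obtain s P where "sP = (s, P)" by fastforce
  with Cons.prems have "output_invariant xs thr (M @ [c]) (out_step m S thr c sP)"
    by (auto intro: output_invariant_step)
  with Cons.IH [of "M @ [c]"] Cons.prems show ?case by simp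
qed simp

lemma output_set_sound:
  assumes "distinct L"
    and "\<forall>c\<in>set L. ss_fmin (S (length c)) c \<le> ucount xs c \<and> ucount xs c \<le> ss_fmax m (S (length c)) c"
  shows "output_set m S thr L \<subseteq> set L
    \<and> (\<forall>p\<in>set L. p \<notin> output_set m S thr L \<longrightarrow> real (ccount xs (output_set m S thr L) p) < thr)"
  using output_invariant_fold [of xs thr "[]" "(\<lambda>_. 0, {})" L S m] assms
  by (cases "fold (out_step m S thr) L (\<lambda>_. 0, {})") (simp_all add: output_set_def)

lemma depth_estimates:
  assumes "hierarchy T h" and "valid_stream T xs" and "p \<in> T" and "m > 0"
    and "ss_invariant m S (depth_input (length p) xs)"
  shows "ss_fmin S p \<le> ucount xs p \<and> ucount xs p \<le> ss_fmax m S p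
    \<and> real (ss_fmax m S p) - real (ss_fmin S p) \<le> real (total xs) / real m"
proof -
  have "length p \<le> length e" if "(e, c) \<in> set xs" for e c
    using that assms(1-3) hierarchy_length_le hierarchy_leaf_length
    unfolding valid_stream_def by fastforce
  then have "freq (depth_input (length p) xs) p = ucount xs p"
    by (intro freq_depth_input) auto
  with ss_estimates [OF assms(5,4), of p]
  have bounds: "ss_fmin S p \<le> ucount xs p" "ucount xs p \<le> ss_fmax m S p"
    and "m * (ss_fmax m S p - ss_fmin S p) \<le> total xs"
    by (simp_all add: weight_depth_input)
  then have "real m * (real (ss_fmax m S p) - real (ss_fmin S p)) \<le> real (total xs)"
    by (metis le_trans of_nat_diff of_nat_le_iff of_nat_mult)
  with assms(4) bounds show ?thesis by (simp add: pos_le_divide_eq mult.commute)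
qed

theorem theorem1:
  fixes T :: "'a list set" and h :: nat and xs :: "'a stream"
    and phi eps :: real and m :: nat
    and S :: "nat \<Rightarrow> 'a list ss_state" and L :: "'a list list"
  assumes hier: "hierarchy T h"
    and stream: "valid_stream T xs"
    and phi: "0 < phi" "phi \<le> 1"
    and eps: "eps > 0" "m > 0" "1 / eps = real m"
    and runs: "\<forall>d\<le>h. ss_run m Map.empty (depth_input d xs) (S d)"
    and post: "postorder T L"
  shows "(\<forall>d\<le>h. card (dom (S d)) \<le> m)
    \<and> (\<forall>p\<in>output_set m S (phi * real (total xs)) L.
          ss_fmin (S (length p)) p \<le> ucount xs p
        \<and> ucount xs p \<le> ss_fmax m (S (length p)) p
        \<and> real (ss_fmax m (S (length p)) p) - real (ss_fmin (S (length p)) p) \<le> eps * real (total xs))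
    \<and> (\<forall>p\<in>T. p \<notin> output_set m S (phi * real (total xs)) L \<longrightarrow>
          real (ccount xs (output_set m S (phi * real (total xs)) L) p) < phi * real (total xs))"
proof -
  let ?thr = "phi * real (total xs)"
  have inv: "ss_invariant m (S d) (depth_input d xs)" if "d \<le> h" for d
    using ss_run_invariant [OF _ ss_invariant_empty] runs that by fastforce
  have "eps = 1 / real m" using eps by (simp add: field_simps)
  then have accuracy: "ss_fmin (S (length p)) p \<le> ucount xs p \<and> ucount xs p \<le> ss_fmax m (S (length p)) p
      \<and> real (ss_fmax m (S (length p)) p) - real (ss_fmin (S (length p)) p) \<le> eps * real (total xs)"
    if "p \<in> T" for p
    using depth_estimates [OF hier stream that eps(2) inv] hierarchy_length_le [OF hier that] by simp
  have "distinct L" and "set L = T" using post by (simp_all add: postorder_def)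
  with accuracy have "output_set m S ?thr L \<subseteq> T
      \<and> (\<forall>p\<in>T. p \<notin> output_set m S ?thr L \<longrightarrow> real (ccount xs (output_set m S ?thr L) p) < ?thr)"
    using output_set_sound [of L S xs m ?thr] by auto
  moreover have "\<forall>d\<le>h. card (dom (S d)) \<le> m" using inv by (simp add: ss_invariant_def)
  ultimately show ?thesis using accuracy by blast
qed

end
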